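(* Let $G$ be a po-group. The po-group $\mathbb Z \overrightarrow{\times} G$ satisfies RDP$_1$ if and only if $G$ is directed and satisfies RDP$_1$.
   Context: A po-group is a (not necessarily Abelian, additively written) group with a partial order $\le$ such that $a\le b$ implies $x+a+y\le x+b+y$; $G^+$ is its positive cone; $G$ is directed if any two elements have a common upper bound. $\mathbb Z \overrightarrow{\times} G$ is the group $\mathbb Z\times G$ (componentwise operation) with the lexicographic order: $(m,g)\le(n,h)$ iff $m<n$, or $m=n$ and $g\le h$. RDP$_1$: for all $a_1,a_2,b_1,b_2$ in the positive cone with $a_1+a_2=b_1+b_2$ there are positive $c_{11},c_{12},c_{21},c_{22}$ with $a_1=c_{11}+c_{12}$, $a_2=c_{21}+c_{22}$, $b_1=c_{11}+c_{21}$, $b_2=c_{12}+c_{22}$, such that $0\le x\le c_{12}$ and $0\le y\le c_{21}$ imply $x+y=y+x$. *)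

theory Defs
  imports Main "HOL-Library.Product_Plus"
begin

definition po_group :: "('a::group_add \<Rightarrow> 'a \<Rightarrow> bool) \<Rightarrow> bool" where
  "po_group le \<longleftrightarrow>
     (\<forall>a. le a a) \<and>
     (\<forall>a b. le a b \<and> le b a \<longrightarrow> a = b) \<and>
     (\<forall>a b c. le a b \<and> le b c \<longrightarrow> le a c) \<and>
     (\<forall>a b x y. le a b \<longrightarrow> le (x + a + y) (x + b + y))"

definition directed :: "('a \<Rightarrow> 'a \<Rightarrow> bool) \<Rightarrow> bool" where
  "directed le \<longleftrightarrow> (\<forall>a b. \<exists>c. le a c \<and> le b c)"

text \<open>Lexicographic order on Z x G (group structure is componentwise).\<close>
definition lex_le :: "('a \<Rightarrow> 'a \<Rightarrow> bool) \<Rightarrow> int \<times> 'a \<Rightarrow> int \<times> 'a \<Rightarrow> bool" where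
  "lex_le le p q \<longleftrightarrow> fst p < fst q \<or> (fst p = fst q \<and> le (snd p) (snd q))"

definition RDP1 :: "('a::group_add \<Rightarrow> 'a \<Rightarrow> bool) \<Rightarrow> bool" where
  "RDP1 le \<longleftrightarrow>
     (\<forall>a1 a2 b1 b2. le 0 a1 \<and> le 0 a2 \<and> le 0 b1 \<and> le 0 b2 \<and> a1 + a2 = b1 + b2 \<longrightarrow>
        (\<exists>c11 c12 c21 c22. le 0 c11 \<and> le 0 c12 \<and> le 0 c21 \<and> le 0 c22 \<and>
           a1 = c11 + c12 \<and> a2 = c21 + c22 \<and> b1 = c11 + c21 \<and> b2 = c12 + c22 \<and>
           (\<forall>x y. le 0 x \<and> le x c12 \<and> le 0 y \<and> le y c21 \<longrightarrow> x + y = y + x)))"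

end

theory Submission
  imports Defs
begin

text \<open>An element of \<open>\<int> \<times> G\<close> above a positive level dominates everything at
lower levels, so a decomposition problem in \<open>\<int> \<times> G\<close> whose levels differ is solved
trivially with a zero cross term, and one whose levels agree reduces, after translating
the positive-level parts into the positive cone of \<open>G\<close> (possible when \<open>G\<close> is directed),
to RDP\<open>\<^sub>1\<close> in \<open>G\<close>. Conversely, level-zero problems are problems in \<open>G\<close>, and decomposing
\<open>(1, g) + (1, -g) = (1, 0) + (1, 0)\<close> produces a positive upper bound of \<open>g\<close>.\<close>

definition commute_below :: "('a::group_add \<Rightarrow> 'a \<Rightarrow> bool) \<Rightarrow> 'a \<Rightarrow> 'a \<Rightarrow> bool" where
  "commute_below le u v \<longleftrightarrow>
     (\<forall>x y. le 0 x \<and> le x u \<and> le 0 y \<and> le y v \<longrightarrow> x + y = y + x)"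

definition RDP1_witness ::
  "('a::group_add \<Rightarrow> 'a \<Rightarrow> bool) \<Rightarrow> 'a \<Rightarrow> 'a \<Rightarrow> 'a \<Rightarrow> 'a \<Rightarrow> 'a \<Rightarrow> 'a \<Rightarrow> 'a \<Rightarrow> 'a \<Rightarrow> bool" where
  "RDP1_witness le a1 a2 b1 b2 c11 c12 c21 c22 \<longleftrightarrow>
     le 0 c11 \<and> le 0 c12 \<and> le 0 c21 \<and> le 0 c22 \<and>
     a1 = c11 + c12 \<and> a2 = c21 + c22 \<and> b1 = c11 + c21 \<and> b2 = c12 + c22 \<and>
     commute_below le c12 c21"

lemma RDP1_iff_witness:
  "RDP1 le \<longleftrightarrow>
     (\<forall>a1 a2 b1 b2. le 0 a1 \<and> le 0 a2 \<and> le 0 b1 \<and> le 0 b2 \<and> a1 + a2 = b1 + b2 \<longrightarrow>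
        (\<exists>c11 c12 c21 c22. RDP1_witness le a1 a2 b1 b2 c11 c12 c21 c22))"
  by (simp add: RDP1_def RDP1_witness_def commute_below_def)

lemma RDP1_obtain_witness:
  assumes "RDP1 le" "le 0 a1" "le 0 a2" "le 0 b1" "le 0 b2" "a1 + a2 = b1 + b2"
  obtains c11 c12 c21 c22 where "RDP1_witness le a1 a2 b1 b2 c11 c12 c21 c22"
  using assms unfolding RDP1_iff_witness by blast

context
  fixes le :: "'a::group_add \<Rightarrow> 'a \<Rightarrow> bool"
  assumes po: "po_group le"
begin

lemma po_group_refl: "le a a"
  using po unfolding po_group_def by blast

lemma po_group_antisym: "le a b \<Longrightarrow> le b a \<Longrightarrow> a = b"
  using po unfolding po_group_def by blast

lemma po_group_trans: "le a b \<Longrightarrow> le b c \<Longrightarrow> le a c"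
  using po unfolding po_group_def by blast

lemma po_group_add_mono: "le a b \<Longrightarrow> le (x + a + y) (x + b + y)"
  using po unfolding po_group_def by blast

lemma po_group_add_mono_left: "le a b \<Longrightarrow> le (x + a) (x + b)"
  using po_group_add_mono[of a b x 0] by simp

lemma po_group_add_mono_right: "le a b \<Longrightarrow> le (a + y) (b + y)"
  using po_group_add_mono[of a b 0 y] by simp

lemma po_group_nonneg_iff_le: "le 0 (- a + b) \<longleftrightarrow> le a b"
  using po_group_add_mono_left[of 0 "- a + b" a] po_group_add_mono_left[of a b "- a"]
  by (auto simp: add.assoc[symmetric])

lemma po_group_le_add_nonpos_right: "le (- c) 0 \<Longrightarrow> le (a + - c) a"
  using po_group_add_mono_left by fastforce

lemma po_group_neg_nonpos: "le 0 c \<Longrightarrow> le (- c) 0"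
  using po_group_add_mono_left[of 0 c "- c"] by simp

lemma commute_below_zero_left: "commute_below le 0 v"
  unfolding commute_below_def using po_group_antisym by (metis add_0_left add_0_right)

lemma commute_below_zero_right: "commute_below le u 0"
  unfolding commute_below_def using po_group_antisym by (metis add_0_left add_0_right)

lemma RDP1_witness_if_le:
  assumes "le 0 a1" "le 0 b2" "le a1 b1" "a1 + a2 = b1 + b2"
  shows "RDP1_witness le a1 a2 b1 b2 a1 0 (- a1 + b1) b2"
proof -
  have "a2 = - a1 + (b1 + b2)"
    using assms(4) by (metis add_minus_cancel)
  then show ?thesis
    using assms po_group_nonneg_iff_le po_group_refl commute_below_zero_left
    by (simp add: RDP1_witness_def add.assoc)
qed

lemma RDP1_witness_if_ge:
  assumes "le 0 b1" "le 0 a2" "le b1 a1" "a1 + a2 = b1 + b2"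
  shows "RDP1_witness le a1 a2 b1 b2 b1 (- b1 + a1) 0 a2"
proof -
  have "b2 = - b1 + (a1 + a2)"
    using assms(4) by (metis add_minus_cancel)
  then show ?thesis
    using assms po_group_nonneg_iff_le po_group_refl commute_below_zero_right
    by (simp add: RDP1_witness_def add.assoc)
qed

lemma directed_if_nonneg_upper_bounds:
  assumes "\<And>g. \<exists>u. le 0 u \<and> le g u"
  shows "directed le"
  unfolding directed_def
proof (intro allI)
  fix a b
  obtain u where "le 0 u" "le (- a + b) u"
    using assms by blast
  then have "le a (a + u)" "le b (a + u)"
    using po_group_add_mono_left[of 0 u a] po_group_add_mono_left[of "- a + b" u a]
    by (simp_all add: add.assoc[symmetric])
  then show "\<exists>c. le a c \<and> le b c" by blast
qed

lemma directed_shift_left_nonneg: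
  assumes "directed le"
  obtains e where "le 0 (e + a)" "le 0 (e + b)"
proof -
  obtain c where "le (- a) c" "le (- b) c"
    using assms by (auto simp: directed_def)
  then show ?thesis
    using that po_group_add_mono_right[of "- a" c a] po_group_add_mono_right[of "- b" c b]
    by simp
qed

lemma directed_shift_right_nonneg:
  assumes "directed le"
  obtains g where "le 0 (a + g)" "le 0 (b + g)"
proof -
  obtain c where "le (- a) c" "le (- b) c"
    using assms by (auto simp: directed_def)
  then show ?thesis
    using that po_group_add_mono_left[of "- a" c a] po_group_add_mono_left[of "- b" c b]
    by simp
qed

end

lemma po_group_lex_le:
  assumes "po_group le"
  shows "po_group (lex_le le)"
  unfolding po_group_def
proof (intro conjI allI impI)
  fix p q r x y :: "int \<times> 'a"
  show "lex_le le p p"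
    using po_group_refl[OF assms] by (simp add: lex_le_def)
  show "p = q" if "lex_le le p q \<and> lex_le le q p"
    using that po_group_antisym[OF assms] by (auto simp: lex_le_def prod_eq_iff)
  show "lex_le le p r" if "lex_le le p q \<and> lex_le le q r"
    using that po_group_trans[OF assms] unfolding lex_le_def by force
  show "lex_le le (x + p + y) (x + q + y)" if "lex_le le p q"
    using that po_group_add_mono[OF assms] by (auto simp: lex_le_def)
qed

lemma lex_le_if_level_less: "fst p < fst q \<Longrightarrow> lex_le le p q"
  by (simp add: lex_le_def)

text \<open>Since all parts have nonnegative level, a decomposition of level-zero elements lives
entirely in level zero.\<close>

lemma lex_witness_level_zero:
  assumes "RDP1_witness (lex_le le) (0, a1) (0, a2) (0, b1) (0, b2) c11 c12 c21 c22"
  shows "RDP1_witness le a1 a2 b1 b2 (snd c11) (snd c12) (snd c21) (snd c22)"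
proof -
  have levels: "fst c11 = 0" "fst c12 = 0" "fst c21 = 0" "fst c22 = 0"
    using assms by (auto simp: RDP1_witness_def lex_le_def prod_eq_iff)
  have "commute_below le (snd c12) (snd c21)"
    unfolding commute_below_def
  proof (intro allI impI)
    fix x y
    assume "le 0 x \<and> le x (snd c12) \<and> le 0 y \<and> le y (snd c21)"
    then have "((0::int), x) + (0, y) = (0, y) + (0, x)"
      using assms levels
      by (auto simp: RDP1_witness_def commute_below_def lex_le_def)
    then show "x + y = y + x" by simp
  qed
  then show ?thesis
    using assms levels by (auto simp: RDP1_witness_def lex_le_def prod_eq_iff)
qed

lemma RDP1_if_RDP1_lex:
  assumes "RDP1 (lex_le le)"
  shows "RDP1 le"
  unfolding RDP1_iff_witness
proof (intro allI impI)
  fix a1 a2 b1 b2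
  assume "le 0 a1 \<and> le 0 a2 \<and> le 0 b1 \<and> le 0 b2 \<and> a1 + a2 = b1 + b2"
  then have "lex_le le 0 (0, a1)" "lex_le le 0 (0, a2)" "lex_le le 0 (0, b1)" "lex_le le 0 (0, b2)"
    "(0, a1) + (0, a2) = (0, b1) + ((0::int), b2)"
    by (simp_all add: lex_le_def)
  then obtain c11 c12 c21 c22
    where "RDP1_witness (lex_le le) (0, a1) (0, a2) (0, b1) (0, b2) c11 c12 c21 c22"
    by (rule RDP1_obtain_witness[OF assms])
  then show "\<exists>c11 c12 c21 c22. RDP1_witness le a1 a2 b1 b2 c11 c12 c21 c22"
    by (blast dest: lex_witness_level_zero)
qed

lemma nonneg_upper_bound_if_RDP1_lex:
  fixes le :: "'a::group_add \<Rightarrow> 'a \<Rightarrow> bool"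
  assumes po: "po_group le" and RDP1: "RDP1 (lex_le le)"
  shows "\<exists>u. le 0 u \<and> le g u"
proof -
  have "lex_le le 0 (1, g)" "lex_le le 0 (1, - g)" "lex_le le 0 (1, 0)" "lex_le le 0 (1, 0)"
    "(1::int, g) + (1, - g) = (1, 0) + (1, 0)"
    by (simp_all add: lex_le_def)
  then obtain c11 c12 c21 c22
    where c: "RDP1_witness (lex_le le) (1, g) (1, - g) (1, 0) (1, 0) c11 c12 c21 c22"
    by (rule RDP1_obtain_witness[OF RDP1])
  then have levels: "fst c11 + fst c12 = 1" "fst c11 + fst c21 = 1" "fst c12 + fst c22 = 1"
    and nonneg: "lex_le le 0 c11" "lex_le le 0 c12" "lex_le le 0 c21" "lex_le le 0 c22"
    and g: "g = snd c11 + snd c12" "0 = snd c11 + snd c21" "0 = snd c12 + snd c22"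
    by (auto simp: RDP1_witness_def prod_eq_iff)
  have "0 \<le> fst c11" "0 \<le> fst c12" "0 \<le> fst c21" "0 \<le> fst c22"
    using nonneg by (auto simp: lex_le_def)
  then consider "fst c11 = 0" "fst c22 = 0" | "fst c12 = 0" "fst c21 = 0"
    using levels by linarith
  then show ?thesis
  proof cases
    case 1
    text \<open>Here \<open>snd c12 = - snd c22 \<le> 0\<close>, so \<open>snd c11\<close> bounds \<open>g\<close>.\<close>
    then have "le 0 (snd c11)" "le (- snd c22) 0"
      using nonneg po_group_neg_nonpos[OF po] by (auto simp: lex_le_def)
    moreover have "snd c12 = - snd c22"
      using g(3) by (simp add: eq_neg_iff_add_eq_0)
    ultimately show ?thesis
      using g(1) po_group_le_add_nonpos_right[OF po] by metis
  next
    case 2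
    then have "le 0 (snd c12)" "le (- snd c21) 0"
      using nonneg po_group_neg_nonpos[OF po] by (auto simp: lex_le_def)
    moreover have "snd c11 = - snd c21"
      using g(2) by (simp add: eq_neg_iff_add_eq_0)
    ultimately show ?thesis
      using g(1) po_group_add_mono_right[OF po, of "- snd c21" 0 "snd c12"] by auto
  qed
qed

lemma directed_if_RDP1_lex:
  assumes "po_group le" "RDP1 (lex_le le)"
  shows "directed le"
  using directed_if_nonneg_upper_bounds[OF assms(1)] nonneg_upper_bound_if_RDP1_lex[OF assms]
  by blast

lemma lex_nonneg_shift_left:
  assumes "po_group le" "directed le" "lex_le le 0 (k, x)" "lex_le le 0 (k, y)"
  obtains e where "le 0 (e + x)" "le 0 (e + y)" "k = 0 \<Longrightarrow> e = 0"
proof (cases "k = 0")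
  case True
  then show ?thesis
    using assms(3,4) that[of 0] by (simp add: lex_le_def)
next
  case False
  then show ?thesis
    using directed_shift_left_nonneg[OF assms(1,2)] that by metis
qed

lemma lex_nonneg_shift_right:
  assumes "po_group le" "directed le" "lex_le le 0 (l, x)" "lex_le le 0 (l, y)"
  obtains g where "le 0 (x + g)" "le 0 (y + g)" "l = 0 \<Longrightarrow> g = 0"
proof (cases "l = 0")
  case True
  then show ?thesis
    using assms(3,4) that[of 0] by (simp add: lex_le_def)
next
  case False
  then show ?thesis
    using directed_shift_right_nonneg[OF assms(1,2)] that by metis
qed

lemma lex_witness_from_shifted_witness:
  assumes d: "RDP1_witness le (e + x1) (x2 + g) (e + y1) (y2 + g) d11 d12 d21 d22"
    and "0 \<le> k" "0 \<le> l" "k = 0 \<Longrightarrow> e = 0" "l = 0 \<Longrightarrow> g = 0"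
  shows "RDP1_witness (lex_le le) (k, x1) (l, x2) (k, y1) (l, y2)
           (k, - e + d11) (0, d12) (0, d21) (l, d22 + - g)"
proof -
  have "x1 = - e + d11 + d12" "y1 = - e + d11 + d21"
    "x2 = d21 + d22 + - g" "y2 = d12 + d22 + - g"
    using d unfolding RDP1_witness_def
    by (metis add.assoc add_minus_cancel, metis add.assoc add_minus_cancel,
        metis add_diff_cancel diff_conv_add_uminus, metis add_diff_cancel diff_conv_add_uminus)
  moreover have "lex_le le 0 (k, - e + d11)" "lex_le le 0 (l, d22 + - g)"
    using d assms(2-5) by (auto simp: RDP1_witness_def lex_le_def)
  moreover have "commute_below (lex_le le) (0, d12) (0, d21)"
    using d by (auto simp: RDP1_witness_def commute_below_def lex_le_def prod_eq_iff)
  ultimately show ?thesis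
    using d by (simp add: RDP1_witness_def lex_le_def add.assoc add_diff_eq)
qed

lemma RDP1_lex_if_directed_RDP1:
  fixes le :: "'a::group_add \<Rightarrow> 'a \<Rightarrow> bool"
  assumes po: "po_group le" and dir: "directed le" and RDP1: "RDP1 le"
  shows "RDP1 (lex_le le)"
  unfolding RDP1_iff_witness
proof (intro allI impI)
  fix a1 a2 b1 b2 :: "int \<times> 'a"
  assume h: "lex_le le 0 a1 \<and> lex_le le 0 a2 \<and> lex_le le 0 b1 \<and> lex_le le 0 b2 \<and>
    a1 + a2 = b1 + b2"
  note po_lex = po_group_lex_le[OF po]
  consider "fst a1 < fst b1" | "fst b1 < fst a1" | "fst a1 = fst b1" by linarith
  then show "\<exists>c11 c12 c21 c22. RDP1_witness (lex_le le) a1 a2 b1 b2 c11 c12 c21 c22"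
  proof cases
    case 1
    then show ?thesis
      using h RDP1_witness_if_le[OF po_lex] lex_le_if_level_less by blast
  next
    case 2
    then show ?thesis
      using h RDP1_witness_if_ge[OF po_lex] lex_le_if_level_less by blast
  next
    case 3
    obtain k x1 y1 l x2 y2 where
      a: "a1 = (k, x1)" "b1 = (k, y1)" "a2 = (l, x2)" "b2 = (l, y2)"
      using 3 h by (metis prod.collapse add_left_cancel fst_add)
    obtain e where e: "le 0 (e + x1)" "le 0 (e + y1)" "k = 0 \<Longrightarrow> e = 0"
      using lex_nonneg_shift_left[OF po dir] h a by metis
    obtain g where g: "le 0 (x2 + g)" "le 0 (y2 + g)" "l = 0 \<Longrightarrow> g = 0"
      using lex_nonneg_shift_right[OF po dir] h a by metis
    have "(e + x1) + (x2 + g) = (e + y1) + (y2 + g)"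
      using h a by (simp add: add.assoc[symmetric]) (simp add: add.assoc)
    then obtain d11 d12 d21 d22
      where "RDP1_witness le (e + x1) (x2 + g) (e + y1) (y2 + g) d11 d12 d21 d22"
      using RDP1_obtain_witness[OF RDP1 e(1) g(1) e(2) g(2)] by blast
    moreover have "0 \<le> k" "0 \<le> l"
      using h a by (auto simp: lex_le_def)
    ultimately show ?thesis
      using lex_witness_from_shifted_witness e(3) g(3) a by blast
  qed
qed

theorem theorem3p7:
  fixes le :: "'a::group_add \<Rightarrow> 'a \<Rightarrow> bool"
  assumes "po_group le"
  shows "RDP1 (lex_le le) \<longleftrightarrow> directed le \<and> RDP1 le"
  using assms RDP1_if_RDP1_lex directed_if_RDP1_lex RDP1_lex_if_directed_RDP1 by blast

end
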